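(* For each positive integer $n$ let $K_n=\{\alpha_{0n},\alpha_{1n},\dots,\alpha_{nn}\}\subset[0,1]$ with $\alpha_{0n}\le\alpha_{1n}\le\cdots\le\alpha_{nn}$, and suppose $$\lim_{n\to\infty}\max_{p\in[0,1]}\sum_{k=0}^n\binom{n}{k}p^k(1-p)^{n-k}|p-\alpha_{kn}|=0.$$ Then the normalized counting measures $\delta_{K_n}=\frac{1}{n+1}\sum_{j=0}^n\delta_{\alpha_{jn}}$ converge weak$^*$ to Lebesgue measure $dx$ on $[0,1]$ as $n\to\infty$, i.e. $\lim_{n\to\infty}\int_0^1 g\,d\delta_{K_n}=\int_0^1 g(x)\,dx$ for every $g\in C[0,1]$.
   Context: $\delta_x$ denotes the unit point mass (Dirac measure) at $x$. *)

theory Defs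
  imports "HOL-Analysis.Analysis"
begin

end

theory Submission
  imports Defs
begin

text \<open>With the Bernstein basis \<open>B\<^sub>n\<^sub>k\<close>, one has \<open>\<integral>\<^sub>0\<^sup>1 B\<^sub>n\<^sub>k = 1/(n+1)\<close> and \<open>\<Sum>\<^sub>k B\<^sub>n\<^sub>k = 1\<close>, so
  the error \<open>(1/(n+1)) \<Sum>\<^sub>k g(\<alpha>\<^sub>k\<^sub>n) - \<integral>\<^sub>0\<^sup>1 g\<close> is the integral of \<open>\<Sum>\<^sub>k B\<^sub>n\<^sub>k(p) (g(\<alpha>\<^sub>k\<^sub>n) - g(p))\<close>.
  A continuous \<open>g\<close> on \<open>[0,1]\<close> satisfies \<open>|g x - g y| \<le> \<epsilon> + C\<^sub>\<epsilon> |x - y|\<close> for every \<open>\<epsilon> > 0\<close>,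
  so the integrand is bounded by \<open>\<epsilon>\<close> plus \<open>C\<^sub>\<epsilon>\<close> times the quantity assumed to tend to zero.\<close>

lemma Bernstein_has_integral:
  assumes "k \<le> n"
  shows "(Bernstein n k has_integral 1 / real (Suc n)) {0..1}"
proof -
  have "((\<lambda>t. t powr (real k + 1 - 1) * (1 - t) powr (real (n - k) + 1 - 1))
          has_integral Beta (real k + 1) (real (n - k) + 1)) {0..1}"
    by (rule has_integral_Beta_real) auto
  then have beta: "((\<lambda>t. t ^ k * (1 - t) ^ (n - k)) has_integral Beta (real k + 1) (real (n - k) + 1)) {0<..<1}"
    unfolding has_integral_Icc_iff_Ioo
    by (subst (asm) has_integral_cong) (auto simp: powr_realpow)
  have Beta_eq: "Beta (real k + 1) (real (n - k) + 1) = fact k * fact (n - k) / fact (Suc n)"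
  proof -
    have "real k + 1 + (real (n - k) + 1) = 1 + real (Suc n)" using assms by simp
    then show ?thesis unfolding Beta_def
      by (metis Gamma_fact add.commute of_nat_add of_nat_1)
  qed
  have "(Bernstein n k has_integral real (n choose k) * (fact k * fact (n - k) / fact (Suc n))) {0<..<1}"
    using has_integral_mult_right[OF beta[unfolded Beta_eq], of "real (n choose k)"]
    unfolding Bernstein_def mult.assoc .
  moreover have "real (n choose k) * (fact k * fact (n - k) / fact (Suc n)) = 1 / real (Suc n)"
    using assms by (simp add: binomial_fact divide_simps)
  ultimately show ?thesis
    unfolding has_integral_Icc_iff_Ioo by simp
qed

lemma Bernstein_average_has_integral:
  fixes g :: "real \<Rightarrow> real"
  assumes "g integrable_on {0..1}"
  shows "((\<lambda>p. \<Sum>k\<le>n. Bernstein n k p * (g (a k) - g p)) has_integral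
           (1 / real (n + 1)) * (\<Sum>k\<le>n. g (a k)) - integral {0..1} g) {0..1}"
proof -
  have "(\<Sum>k\<le>n. Bernstein n k p * (g (a k) - g p)) = (\<Sum>k\<le>n. Bernstein n k p * g (a k)) - g p" for p
    by (simp add: right_diff_distrib sum_subtractf flip: sum_distrib_right)
  moreover have sum_int: "((\<lambda>p. \<Sum>k\<le>n. Bernstein n k p * g (a k)) has_integral
                            (\<Sum>k\<le>n. 1 / real (Suc n) * g (a k))) {0..1}"
    by (intro has_integral_sum finite_atMost has_integral_mult_left Bernstein_has_integral) auto
  ultimately show ?thesis
    using has_integral_diff[OF sum_int integrable_integral[OF assms]] by (simp add: sum_distrib_left)
qed

lemma continuous_on_compact_modulus:
  fixes g :: "'a::metric_space \<Rightarrow> 'b::metric_space"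
  assumes "compact S" "continuous_on S g" "\<epsilon> > 0"
  obtains C where "C \<ge> 0" "\<And>x y. x \<in> S \<Longrightarrow> y \<in> S \<Longrightarrow> dist (g x) (g y) \<le> \<epsilon> + C * dist x y"
proof -
  obtain \<delta> where "\<delta> > 0" and \<delta>: "\<And>x y. x \<in> S \<Longrightarrow> y \<in> S \<Longrightarrow> dist y x < \<delta> \<Longrightarrow> dist (g y) (g x) < \<epsilon>"
    using compact_uniformly_continuous[OF assms(2,1)] assms(3)
    unfolding uniformly_continuous_on_def by metis
  obtain B where B: "\<And>x y. x \<in> S \<Longrightarrow> y \<in> S \<Longrightarrow> dist (g x) (g y) \<le> B"
    using compact_imp_bounded[OF compact_continuous_image[OF assms(2,1)]]
    unfolding bounded_two_points by blast
  show thesis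
  proof
    show "0 \<le> max B 0 / \<delta>" using \<open>\<delta> > 0\<close> by simp
    fix x y assume xy: "x \<in> S" "y \<in> S"
    show "dist (g x) (g y) \<le> \<epsilon> + max B 0 / \<delta> * dist x y"
    proof (cases "dist x y < \<delta>")
      case True
      then show ?thesis using \<delta>[OF xy(2,1)] \<open>\<delta> > 0\<close> by (simp add: dist_commute add_increasing2)
    next
      case False
      have "max B 0 = max B 0 / \<delta> * \<delta>" using \<open>\<delta> > 0\<close> by simp
      also have "\<dots> \<le> max B 0 / \<delta> * dist x y"
        using False \<open>\<delta> > 0\<close> by (intro mult_left_mono) auto
      finally have "max B 0 \<le> max B 0 / \<delta> * dist x y" .
      then show ?thesis using B[OF xy] \<open>\<epsilon> > 0\<close> by linarith
    qed
  qed
qed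

lemma Bernstein_average_error_le:
  fixes g :: "real \<Rightarrow> real"
  assumes g: "g integrable_on {0..1}"
    and a: "\<And>k. k \<le> n \<Longrightarrow> a k \<in> {0..1}"
    and modulus: "\<And>x y. x \<in> {0..1} \<Longrightarrow> y \<in> {0..1} \<Longrightarrow> \<bar>g x - g y\<bar> \<le> \<epsilon> + C * \<bar>x - y\<bar>"
    and "C \<ge> 0"
    and D_bound: "\<And>p. p \<in> {0..1} \<Longrightarrow> (\<Sum>k\<le>n. Bernstein n k p * \<bar>p - a k\<bar>) \<le> D"
  shows "\<bar>(1 / real (n + 1)) * (\<Sum>k\<le>n. g (a k)) - integral {0..1} g\<bar> \<le> \<epsilon> + C * D"
proof -
  have bound: "norm (\<Sum>k\<le>n. Bernstein n k p * (g (a k) - g p)) \<le> \<epsilon> + C * D" if p: "p \<in> {0..1}" for p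
  proof -
    have "norm (\<Sum>k\<le>n. Bernstein n k p * (g (a k) - g p)) \<le> (\<Sum>k\<le>n. Bernstein n k p * (\<epsilon> + C * \<bar>p - a k\<bar>))"
      unfolding real_norm_def
    proof (rule order_trans[OF sum_abs sum_mono])
      fix k assume "k \<in> {..n}"
      then have "\<bar>g (a k) - g p\<bar> \<le> \<epsilon> + C * \<bar>p - a k\<bar>"
        using modulus[OF a p] by (simp add: abs_minus_commute)
      then show "\<bar>Bernstein n k p * (g (a k) - g p)\<bar> \<le> Bernstein n k p * (\<epsilon> + C * \<bar>p - a k\<bar>)"
        using p Bernstein_nonneg[of p n k] by (simp add: abs_mult mult_left_mono)
    qed
    also have "\<dots> = \<epsilon> + C * (\<Sum>k\<le>n. Bernstein n k p * \<bar>p - a k\<bar>)"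
      by (simp add: distrib_left sum.distrib mult.left_commute[of _ C] flip: sum_distrib_left sum_distrib_right)
    also have "\<dots> \<le> \<epsilon> + C * D"
      using D_bound[OF p] \<open>C \<ge> 0\<close> by (simp add: mult_left_mono)
    finally show ?thesis .
  qed
  have "0 \<le> \<epsilon> + C * D"
    using bound[of 0] by (simp add: order_trans[OF norm_ge_zero])
  then show ?thesis
    using has_integral_bound[of _ _ _ "0::real" 1, unfolded cbox_interval, OF _
        Bernstein_average_has_integral[OF g] bound]
    by simp
qed

lemma LIMSEQ_of_modulus_bound:
  fixes x :: "nat \<Rightarrow> 'a::metric_space"
  assumes "D \<longlonglongrightarrow> 0"
    and "\<And>\<epsilon>. \<epsilon> > 0 \<Longrightarrow> \<exists>C. \<forall>\<^sub>F n in sequentially. dist (x n) L \<le> \<epsilon> + C * D n"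
  shows "x \<longlonglongrightarrow> L"
proof (rule tendstoI)
  fix e :: real assume "e > 0"
  then obtain C where C: "\<forall>\<^sub>F n in sequentially. dist (x n) L \<le> e / 2 + C * D n"
    using assms(2)[of "e / 2"] by auto
  have "\<forall>\<^sub>F n in sequentially. dist (C * D n) 0 < e / 2"
    using tendstoD[OF tendsto_mult_right_zero[OF assms(1)], of "e / 2"] \<open>e > 0\<close> by simp
  with C show "\<forall>\<^sub>F n in sequentially. dist (x n) L < e"
    by eventually_elim (simp add: dist_real_def)
qed

theorem theorem3p4:
  fixes \<alpha> :: "nat \<Rightarrow> nat \<Rightarrow> real"
  assumes range: "\<And>n k. n \<ge> 1 \<Longrightarrow> k \<le> n \<Longrightarrow> \<alpha> n k \<in> {0..1}"
    and mono: "\<And>n j k. n \<ge> 1 \<Longrightarrow> j \<le> k \<Longrightarrow> k \<le> n \<Longrightarrow> \<alpha> n j \<le> \<alpha> n k"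
    and lim: "(\<lambda>n. Sup ((\<lambda>p. \<Sum>k\<le>n. real (n choose k) * p ^ k * (1 - p) ^ (n - k) * \<bar>p - \<alpha> n k\<bar>) ` {0..1}))
              \<longlonglongrightarrow> 0"
  shows "\<And>g. continuous_on {0..1} g \<Longrightarrow>
    (\<lambda>n. (1 / real (n + 1)) * (\<Sum>j\<le>n. g (\<alpha> n j) :: real)) \<longlonglongrightarrow> integral {0..1} g"
proof -
  fix g :: "real \<Rightarrow> real"
  assume g: "continuous_on {0..1} g"
  define D where "D n = Sup ((\<lambda>p. \<Sum>k\<le>n. Bernstein n k p * \<bar>p - \<alpha> n k\<bar>) ` {0..1})" for n
  have "D \<longlonglongrightarrow> 0"
    using lim unfolding D_def Bernstein_def .
  have D_upper: "(\<Sum>k\<le>n. Bernstein n k p * \<bar>p - \<alpha> n k\<bar>) \<le> D n" if "p \<in> {0..1}" for n p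
    unfolding D_def using that
    by (intro cSup_upper imageI bounded_imp_bdd_above compact_imp_bounded compact_continuous_image)
       (auto simp: Bernstein_def intro!: continuous_intros)
  show "(\<lambda>n. (1 / real (n + 1)) * (\<Sum>j\<le>n. g (\<alpha> n j))) \<longlonglongrightarrow> integral {0..1} g"
  proof (rule LIMSEQ_of_modulus_bound[OF \<open>D \<longlonglongrightarrow> 0\<close>])
    fix \<epsilon> :: real assume "\<epsilon> > 0"
    then obtain C where "C \<ge> 0"
      and C: "\<And>x y. x \<in> {0..1} \<Longrightarrow> y \<in> {0..1} \<Longrightarrow> \<bar>g x - g y\<bar> \<le> \<epsilon> + C * \<bar>x - y\<bar>"
      using continuous_on_compact_modulus[OF compact_Icc g] by (metis dist_real_def)
    have "\<forall>\<^sub>F n in sequentially.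
            dist ((1 / real (n + 1)) * (\<Sum>j\<le>n. g (\<alpha> n j))) (integral {0..1} g) \<le> \<epsilon> + C * D n"
      using eventually_ge_at_top[of 1]
    proof eventually_elim
      case (elim n)
      then show ?case unfolding dist_real_def
        by (intro Bernstein_average_error_le[OF integrable_continuous_interval[OF g] _ C \<open>C \<ge> 0\<close> D_upper] range)
    qed
    then show "\<exists>C. \<forall>\<^sub>F n in sequentially.
                 dist ((1 / real (n + 1)) * (\<Sum>j\<le>n. g (\<alpha> n j))) (integral {0..1} g) \<le> \<epsilon> + C * D n" ..
  qed
qed

end
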